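(* Let $(\Xi,\mathcal{F})$ be a measurable space and let $(\mathbb{X},d_{\mathbb{X}})$ be a metric space which is a Suslin space. Let $P$ and $P^\nu$, $\nu\in\mathbb{N}$, be probability measures on $(\Xi,\mathcal{F})$, and let $f,f^\nu:\Xi\times\mathbb{X}\to\overline{\mathbb{R}}$, $\nu\in\mathbb{N}$, be functions. Suppose that: (i) $f$ and all $f^\nu$ are measurable functions, and $f(\xi,\cdot)$ is lower semicontinuous for $P$-a.e. $\xi\in\Xi$; (ii) there exist a countable dense subset $\mathbb{X}_0$ of $\mathbb{X}$ and an integer $\kappa_0\in\mathbb{N}$ such that $$\liminf_{\nu\to+\infty} E^{P^\nu}\big[f^\nu_\kappa\big](x_0)\ \ge\ E^{P}\big[f_\kappa\big](x_0)\ >\ -\infty$$ for each $x_0\in\mathbb{X}_0$ and each $\kappa\in[\kappa_0,+\infty)$. Then for every $x\in\mathbb{X}$, $$\liminf_{(\nu,y)\to(+\infty,x)} E^{P^\nu}\big[f^\nu\big](y)\ \ge\ E^{P}\big[f\big](x),$$ and moreover the right-hand side exceeds $-\infty$ whenever there exists $\tilde x\in\mathbb{X}$ with $\liminf_{(\nu,y)\to(+\infty,\tilde x)} E^{P^\nu}[f^\nu](y)<+\infty$.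
   Context: $\overline{\mathbb{R}}=\mathbb{R}\cup\{-\infty,+\infty\}$. For a probability $\mu$ and a function $g$ with values in $\overline{\mathbb{R}}$ measurable with respect to (the $\mu$-completion of) the $\sigma$-algebra, $\mathbb{E}^\mu[g]:=\int g_+\,d\mu-\int g_-\,d\mu$ with $g_+=\max\{g,0\}$, $g_-=-\min\{g,0\}$, and the conventions $+\infty-\alpha=+\infty$ for all $\alpha\in\overline{\mathbb{R}}$ (so $\infty-\infty=+\infty$) and $\beta-(+\infty)=-\infty$ for $\beta\in\mathbb{R}$. For an integrand $h:\Xi\times\mathbb{X}\to\overline{\mathbb{R}}$ and probability $Q$, the expectation function is $E^{Q}[h](x):=\mathbb{E}^{Q}[h(\xi,x)]$. For $\kappa\in[0,+\infty)$ the Pasch–Hausdorff envelope is $f_\kappa(\xi,x):=\inf_{x'\in\mathbb{X}}\{f(\xi,x')+\kappa d_{\mathbb{X}}(x,x')\}$, and likewise $f^\nu_\kappa$ from $f^\nu$; when $\mathbb{X}$ is Suslin and $f$ is measurable, $\xi\mapsto f_\kappa(\xi,x)$ is measurable with respect to the $P$-completion of $\mathcal{F}$ (and $f^\nu_\kappa(\cdot,x)$ with respect to the $P^\nu$-completion), so these expectations are defined. For functions $h^\nu:\mathbb{X}\to\overline{\mathbb{R}}$, $\liminf_{(\nu,y)\to(+\infty,x)}h^\nu(y):=\lim_{\delta\downarrow0}\lim_{N\to\infty}\inf\{h^\nu(y):\nu\ge N,\ d_{\mathbb{X}}(y,x)<\delta\}$. *)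

theory Defs
  imports "HOL-Analysis.Analysis" "HOL-Probability.Probability"
begin

text \<open>Polish spaces are represented on the carrier
  type nat => real; every Polish space has cardinality at most the continuum and so is
  homeomorphic to a topology on a subset of this type.\<close>
definition suslin_space :: "'b topology \<Rightarrow> bool" where
  "suslin_space X \<longleftrightarrow> Hausdorff_space X \<and>
     (\<exists>(Y :: (nat \<Rightarrow> real) topology) g. completely_metrizable_space Y \<and> separable_space Y \<and>
        continuous_map Y X g \<and> g ` topspace Y = topspace X)"

definition lsc :: "('b::topological_space \<Rightarrow> ereal) \<Rightarrow> bool" where
  "lsc g \<longleftrightarrow> (\<forall>a. open {x. a < g x})"

text \<open>Ereal subtraction satisfies exactly the paper's conventions:
  +inf - a = +inf (incl. inf - inf = inf) and b - inf = -inf for finite b.\<close>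
definition EE :: "'a measure \<Rightarrow> ('a \<Rightarrow> ereal) \<Rightarrow> ereal" where
  "EE \<mu> g = enn2ereal (\<integral>\<^sup>+ \<xi>. e2ennreal (max (g \<xi>) 0) \<partial>completion \<mu>)
           - enn2ereal (\<integral>\<^sup>+ \<xi>. e2ennreal (max (- g \<xi>) 0) \<partial>completion \<mu>)"

definition Efun :: "'a measure \<Rightarrow> ('a \<Rightarrow> 'b \<Rightarrow> ereal) \<Rightarrow> 'b \<Rightarrow> ereal" where
  "Efun Q h x = EE Q (\<lambda>\<xi>. h \<xi> x)"

definition envelope :: "('a \<Rightarrow> 'b::metric_space \<Rightarrow> ereal) \<Rightarrow> real \<Rightarrow> 'a \<Rightarrow> 'b \<Rightarrow> ereal" where
  "envelope f \<kappa> \<xi> x = (INF x'. f \<xi> x' + ereal \<kappa> * ereal (dist x x'))"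

text \<open>liminf_{(nu,y) -> (+inf,x)} h^nu(y) = lim_{delta->0} lim_{N->inf} inf{h^nu(y) : nu >= N, d(y,x) < delta};
  both limits are of monotone (nondecreasing) families, hence suprema.\<close>
definition joint_liminf :: "(nat \<Rightarrow> 'b::metric_space \<Rightarrow> ereal) \<Rightarrow> 'b \<Rightarrow> ereal" where
  "joint_liminf h x = (SUP \<delta>\<in>{0<..}. SUP N. INF \<nu>\<in>{N..}. INF y\<in>{y. dist y x < \<delta>}. h \<nu> y)"

end

theory Submission
  imports Defs
begin

text \<open>
  For \<open>\<kappa> \<ge> 0\<close> the envelope \<open>f_\<kappa>(\<xi>, -)\<close> is \<open>\<kappa>\<close>-Lipschitz, so \<open>E^P[f_\<kappa>]\<close> and all
  \<open>E^(P^\<nu>)[f^\<nu>_\<kappa>]\<close> are \<open>2\<kappa>\<close>-Lipschitz, uniformly in \<open>\<nu>\<close>. Approximating \<open>x\<close> by points of the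
  dense set \<open>X0\<close> and using \<open>f^\<nu>_\<kappa> \<le> f^\<nu>\<close>, hypothesis (ii) therefore gives
  \<open>E^P[f_\<kappa>](x) \<le> liminf E^(P^\<nu>)[f^\<nu>](y)\<close> as \<open>(\<nu>, y) \<rightarrow> (\<infinity>, x)\<close>, for every \<open>\<kappa> \<ge> \<kappa>0\<close>.
  Where \<open>f(\<xi>, -)\<close> is lower semicontinuous and \<open>f_\<kappa>0(\<xi>, x)\<close> is finite, \<open>f_\<kappa>(\<xi>, x)\<close> increases
  to \<open>f(\<xi>, x)\<close> as \<open>\<kappa> \<rightarrow> \<infinity>\<close>. If \<open>E^P[f_\<kappa>0](x)\<close> is finite, this holds almost everywhere and
  the negative parts are integrable, so monotone convergence lets \<open>\<kappa> \<rightarrow> \<infinity>\<close>; if it is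
  \<open>+\<infinity>\<close>, so is the lower limit.

  Since \<open>f_\<kappa>(\<xi>, x)\<close> is an infimum over the uncountable space, its measurability in \<open>\<xi>\<close>
  rests on the measurable projection theorem: projections of product-measurable sets along a
  Suslin space are measurable for the completed measure. Pulled back to a Polish space, such a
  set is the Suslin operation applied to rectangles whose closed sides shrink along every
  branch; by completeness its projection is the Suslin operation applied to measurable sets,
  and the latter is squeezed between measurable envelopes that differ by a null set.
\<close>

section \<open>The Suslin operation\<close>

definition seq_prefix :: "(nat \<Rightarrow> nat) \<Rightarrow> nat \<Rightarrow> nat list" where
  "seq_prefix \<sigma> n = map \<sigma> [0..<n]"

lemma length_seq_prefix [simp]: "length (seq_prefix \<sigma> n) = n"
  by (simp add: seq_prefix_def)

lemma seq_prefix_0 [simp]: "seq_prefix \<sigma> 0 = []"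
  by (simp add: seq_prefix_def)

lemma seq_prefix_Suc: "seq_prefix \<sigma> (Suc n) = seq_prefix \<sigma> n @ [\<sigma> n]"
  by (simp add: seq_prefix_def)

lemma seq_prefix_Suc_Cons: "seq_prefix \<sigma> (Suc n) = \<sigma> 0 # seq_prefix (\<lambda>i. \<sigma> (Suc i)) n"
  by (simp add: seq_prefix_def upt_conv_Cons map_Suc_upt[symmetric] del: upt_Suc)

lemma take_seq_prefix: "take j (seq_prefix \<sigma> n) = seq_prefix \<sigma> (min j n)"
  by (simp add: seq_prefix_def take_map min_def)

lemma seq_prefix_branch:
  assumes root: "P []" and grow: "\<And>s. P s \<Longrightarrow> \<exists>k. P (s @ [k])"
  shows "\<exists>\<sigma>. \<forall>n. P (seq_prefix \<sigma> n)"
proof -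
  have "\<exists>L. \<forall>n. (length (L n) = n \<and> P (L n)) \<and> (\<exists>k. L (Suc n) = L n @ [k])"
  proof (rule dependent_nat_choice)
    show "\<exists>s. length s = 0 \<and> P s" using root by simp
    show "\<exists>t. (length t = Suc n \<and> P t) \<and> (\<exists>k. t = s @ [k])" if hyp: "length s = n \<and> P s" for s n
    proof -
      obtain k where "P (s @ [k])" using grow hyp by blast
      with hyp show ?thesis by (intro exI[of _ "s @ [k]"]) auto
    qed
  qed
  then obtain L where L: "\<And>n. length (L n) = n" "\<And>n. P (L n)" "\<And>n. \<exists>k. L (Suc n) = L n @ [k]"
    by blast
  have "seq_prefix (\<lambda>n. L (Suc n) ! n) n = L n" for n
  proof (induction n)
    case 0
    then show ?case using L(1)[of 0] by simp
  next
    case (Suc n)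
    then show ?case using L(1)[of n] L(3)[of n] by (auto simp: seq_prefix_Suc nth_append)
  qed
  then show ?thesis using L(2) by metis
qed

definition suslin_op :: "(nat list \<Rightarrow> 'a set) \<Rightarrow> 'a set" where
  "suslin_op A = (\<Union>\<sigma>. \<Inter>n. A (seq_prefix \<sigma> n))"

lemma suslin_op_UN:
  assumes "\<And>k. A k [] \<subseteq> B"
  shows "(\<Union>k. suslin_op (A k)) = suslin_op (\<lambda>s. case s of [] \<Rightarrow> B | k # t \<Rightarrow> A k t)"
proof (intro equalityI subsetI)
  fix p assume "p \<in> (\<Union>k. suslin_op (A k))"
  then obtain k \<sigma> where \<sigma>: "\<And>n. p \<in> A k (seq_prefix \<sigma> n)"
    unfolding suslin_op_def by blast
  have "p \<in> B"
    using \<sigma>[of 0] assms[of k] by auto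
  with \<sigma> have "p \<in> (case seq_prefix (case_nat k \<sigma>) n of [] \<Rightarrow> B | k # t \<Rightarrow> A k t)" for n
    by (cases n) (auto simp: seq_prefix_Suc_Cons)
  then show "p \<in> suslin_op (\<lambda>s. case s of [] \<Rightarrow> B | k # t \<Rightarrow> A k t)"
    unfolding suslin_op_def by blast
next
  fix p assume "p \<in> suslin_op (\<lambda>s. case s of [] \<Rightarrow> B | k # t \<Rightarrow> A k t)"
  then obtain \<sigma> where \<sigma>: "\<And>n. p \<in> (case seq_prefix \<sigma> n of [] \<Rightarrow> B | k # t \<Rightarrow> A k t)"
    unfolding suslin_op_def by blast
  have "p \<in> A (\<sigma> 0) (seq_prefix (\<lambda>i. \<sigma> (Suc i)) n)" for n
    using \<sigma>[of "Suc n"] by (simp add: seq_prefix_Suc_Cons)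
  then show "p \<in> (\<Union>k. suslin_op (A k))"
    unfolding suslin_op_def by blast
qed

text \<open>The branches of countably many schemes are interleaved into one branch along the
  pairing \<open>prod_encode\<close>: at stage \<open>m = prod_encode (k, n)\<close> the single constraint of scheme
  \<open>k\<close> at depth \<open>n\<close> is imposed.\<close>
definition interleave :: "(nat \<Rightarrow> nat list \<Rightarrow> 'a) \<Rightarrow> nat list \<Rightarrow> 'a" where
  "interleave A s = (case prod_decode (length s) of
     (k, n) \<Rightarrow> A k (map (\<lambda>i. s ! prod_encode (k, i)) [0..<n]))"

lemma strict_mono_prod_encode_2: "strict_mono (\<lambda>i. prod_encode (k, i))"
  by (rule strict_monoI_Suc) (simp add: prod_encode_def)

lemma interleave_seq_prefix:
  "interleave A (seq_prefix \<tau> (prod_encode (k, n))) = A k (seq_prefix (\<lambda>i. \<tau> (prod_encode (k, i))) n)"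
proof -
  have "map (\<lambda>i. seq_prefix \<tau> (prod_encode (k, n)) ! prod_encode (k, i)) [0..<n]
      = seq_prefix (\<lambda>i. \<tau> (prod_encode (k, i))) n"
    unfolding seq_prefix_def[of "\<lambda>i. \<tau> (prod_encode (k, i))"]
    by (rule map_cong) (auto simp: seq_prefix_def strict_monoD[OF strict_mono_prod_encode_2])
  then show ?thesis
    by (simp add: interleave_def)
qed

lemma suslin_op_INT: "(\<Inter>k. suslin_op (A k)) = suslin_op (interleave A)"
proof (intro equalityI subsetI)
  fix p assume "p \<in> (\<Inter>k. suslin_op (A k))"
  then have "\<forall>k. \<exists>\<sigma>. \<forall>n. p \<in> A k (seq_prefix \<sigma> n)"
    by (simp add: suslin_op_def)
  from choice[OF this] obtain \<Sigma> where \<Sigma>: "\<And>k n. p \<in> A k (seq_prefix (\<Sigma> k) n)"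
    by blast
  define \<tau> where "\<tau> j = \<Sigma> (fst (prod_decode j)) (snd (prod_decode j))" for j
  have "p \<in> interleave A (seq_prefix \<tau> m)" for m
  proof -
    obtain k n where "prod_decode m = (k, n)"
      by (cases "prod_decode m")
    then have "m = prod_encode (k, n)"
      using prod_decode_inverse[of m] by simp
    then show ?thesis
      using \<Sigma>[of k n] by (simp add: interleave_seq_prefix \<tau>_def)
  qed
  then show "p \<in> suslin_op (interleave A)"
    unfolding suslin_op_def by blast
next
  fix p assume "p \<in> suslin_op (interleave A)"
  then obtain \<tau> where \<tau>: "\<And>m. p \<in> interleave A (seq_prefix \<tau> m)"
    unfolding suslin_op_def by blast
  have "p \<in> A k (seq_prefix (\<lambda>i. \<tau> (prod_encode (k, i))) n)" for k n
    using \<tau>[of "prod_encode (k, n)"] by (simp only: interleave_seq_prefix)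
  then show "p \<in> (\<Inter>k. suslin_op (A k))"
    unfolding suslin_op_def by (intro INT_I UN_I[OF UNIV_I]) auto
qed

definition suslin_op_at :: "(nat list \<Rightarrow> 'a set) \<Rightarrow> nat list \<Rightarrow> 'a set" where
  "suslin_op_at A s = (\<Union>\<sigma>\<in>{\<sigma>. seq_prefix \<sigma> (length s) = s}. \<Inter>n. A (seq_prefix \<sigma> n))"

lemma suslin_op_at_Nil: "suslin_op_at A [] = suslin_op A"
  by (simp add: suslin_op_at_def suslin_op_def)

lemma suslin_op_at_subset: "suslin_op_at A s \<subseteq> A s"
proof
  fix \<xi> assume "\<xi> \<in> suslin_op_at A s"
  then obtain \<sigma> where "seq_prefix \<sigma> (length s) = s" "\<forall>n. \<xi> \<in> A (seq_prefix \<sigma> n)"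
    unfolding suslin_op_at_def by blast
  then show "\<xi> \<in> A s" by metis
qed

lemma suslin_op_at_subset_UN: "suslin_op_at A s \<subseteq> (\<Union>k. suslin_op_at A (s @ [k]))"
proof
  fix \<xi> assume "\<xi> \<in> suslin_op_at A s"
  then obtain \<sigma> where \<sigma>: "seq_prefix \<sigma> (length s) = s" "\<forall>n. \<xi> \<in> A (seq_prefix \<sigma> n)"
    unfolding suslin_op_at_def by blast
  then have "seq_prefix \<sigma> (length (s @ [\<sigma> (length s)])) = s @ [\<sigma> (length s)]"
    by (simp add: seq_prefix_Suc)
  with \<sigma>(2) have "\<xi> \<in> suslin_op_at A (s @ [\<sigma> (length s)])"
    unfolding suslin_op_at_def by blast
  then show "\<xi> \<in> (\<Union>k. suslin_op_at A (s @ [k]))" by blast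
qed

text \<open>Take measurable envelopes \<open>H s \<subseteq> A s\<close> of the parts \<open>suslin_op_at A s\<close>. A point of
  \<open>H []\<close> outside \<open>suslin_op A\<close> must leave the envelopes at some node, and the sets of such
  points are null since they lie in \<open>H s\<close> but not in \<open>suslin_op_at A s\<close>.\<close>
lemma (in sigma_finite_measure) suslin_op_in_completion:
  assumes A: "\<And>s. A s \<in> sets M"
  shows "suslin_op A \<in> sets (completion M)"
proof -
  obtain C :: "nat \<Rightarrow> 'a set" where C: "range C \<subseteq> sets M" "(\<Union>i. C i) = space M"
    "\<And>i. emeasure M (C i) \<noteq> \<infinity>"
    using sigma_finite by blast
  have "\<exists>E. measurable_envelope M (suslin_op_at A s) E" for s
  proof -
    have "suslin_op_at A s \<subseteq> (\<Union>i. C i)"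
      using suslin_op_at_subset[of A s] sets.sets_into_space[OF A[of s]] C(2) by blast
    then show ?thesis
      using measurable_envelopeI_countable_cover[of "suslin_op_at A s" C M] C by (auto simp: less_top)
  qed
  then obtain E where E: "\<And>s. measurable_envelope M (suslin_op_at A s) (E s)"
    by metis
  define H where "H s = E s \<inter> A s" for s
  have H: "H s \<in> sets M" "suslin_op_at A s \<subseteq> H s" "H s \<subseteq> A s" for s
    using measurable_envelopeD(1,2)[OF E] A suslin_op_at_subset[of A s] unfolding H_def by blast+
  define N where "N = (\<Union>s. H s - (\<Union>k. H (s @ [k])))"
  have "H s - (\<Union>k. H (s @ [k])) \<in> null_sets M" for s
  proof -
    have "H s - (\<Union>k. H (s @ [k])) \<subseteq> E s - suslin_op_at A s"
      using suslin_op_at_subset_UN[of A s] H(2) unfolding H_def by blast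
    then show ?thesis
      using measurable_envelopeD1[OF E] H(1) by (auto intro!: null_setsI)
  qed
  then have N: "N \<in> null_sets M"
    unfolding N_def by (intro null_sets_UN') auto
  have "H [] - N \<subseteq> suslin_op A"
  proof
    fix \<xi> assume \<xi>: "\<xi> \<in> H [] - N"
    have "\<xi> \<in> H []" and "\<And>s. \<xi> \<in> H s \<Longrightarrow> \<exists>k. \<xi> \<in> H (s @ [k])"
      using \<xi> unfolding N_def by blast+
    then have "\<exists>\<sigma>. \<forall>n. \<xi> \<in> H (seq_prefix \<sigma> n)"
      by (rule seq_prefix_branch)
    then show "\<xi> \<in> suslin_op A"
      using H(3) unfolding suslin_op_def by blast
  qed
  moreover have "suslin_op A \<subseteq> H []"
    using H(2)[of "[]"] by (simp add: suslin_op_at_Nil)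
  ultimately have "suslin_op A = (H [] - N) \<union> (suslin_op A \<inter> N)"
    by blast
  then show ?thesis
    using N H(1) by (intro sets_completionI) auto
qed

lemma sets_pair_measure_borel:
  "sets (M \<Otimes>\<^sub>M borel) = sigma_sets (space M \<times> UNIV) {a \<times> b | a b. a \<in> sets M \<and> open b}"
proof -
  have "sets (M \<Otimes>\<^sub>M borel) = sets (sigma (space M) (sets M) \<Otimes>\<^sub>M sigma UNIV {b. open b})"
    by (intro sets_pair_measure_cong) (simp_all add: borel_def)
  also have "\<dots> = sets (sigma (space M \<times> UNIV) {a \<times> b | a b. a \<in> sets M \<and> open b})"
  proof (subst sigma_prod)
    show "\<exists>E\<subseteq>sets M. countable E \<and> space M = \<Union> E"
      by (intro exI[of _ "{space M}"]) auto
    show "\<exists>E\<subseteq>{b. open b}. countable E \<and> UNIV = \<Union> E"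
      by (intro exI[of _ "{UNIV}"]) auto
  qed (use sets.space_closed in auto)
  also have "\<dots> = sigma_sets (space M \<times> UNIV) {a \<times> b | a b. a \<in> sets M \<and> open b}"
    using sets.sets_into_space by (intro sets_measure_of) blast
  finally show ?thesis .
qed

section \<open>Measurable projection\<close>

locale complete_separable_metric = Metric_space S d for S :: "'y set" and d +
  assumes complete: mcomplete
    and separable: "separable_space mtopology"
begin

lemma dense_sequence: "\<exists>c :: nat \<Rightarrow> 'y. \<forall>y\<in>S. \<forall>e>0. \<exists>i. c i \<in> mball y e"
proof (cases "S = {}")
  case False
  obtain C where C: "countable C" "C \<subseteq> S" "mtopology closure_of C = S"
    using separable unfolding separable_space_def by auto
  with False have "C \<noteq> {}" by auto
  have "\<exists>i. from_nat_into C i \<in> mball y e" if ye: "y \<in> S" "0 < e" for y e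
  proof -
    obtain z where "z \<in> C" "z \<in> mball y e"
      using C(3) ye unfolding metric_closure_of by blast
    then show ?thesis
      using from_nat_into_surj[OF C(1)] by metis
  qed
  then show ?thesis by blast
qed simp

definition shrinking_scheme :: "(nat list \<Rightarrow> 'y set) \<Rightarrow> bool" where
  "shrinking_scheme F \<longleftrightarrow> (\<forall>s. closedin mtopology (F s)) \<and>
     (\<forall>\<sigma> e. 0 < e \<longrightarrow> (\<exists>n a. F (seq_prefix \<sigma> n) \<subseteq> mcball a e))"

definition suslin_rect_sets :: "'a measure \<Rightarrow> ('a \<times> 'y) set set" where
  "suslin_rect_sets M = {suslin_op (\<lambda>s. R s \<times> F s) | R F. (\<forall>s. R s \<in> sets M) \<and> shrinking_scheme F}"

lemma suslin_rect_setsI: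
  "(\<And>s. R s \<in> sets M) \<Longrightarrow> shrinking_scheme F \<Longrightarrow> suslin_op (\<lambda>s. R s \<times> F s) \<in> suslin_rect_sets M"
  unfolding suslin_rect_sets_def by blast

lemma suslin_rect_sets_choice:
  assumes "\<And>k::nat. E k \<in> suslin_rect_sets M"
  shows "\<exists>R F. (\<forall>k s. R k s \<in> sets M) \<and> (\<forall>k. shrinking_scheme (F k)) \<and>
    (\<forall>k. E k = suslin_op (\<lambda>s. R k s \<times> F k s))"
proof -
  have "\<exists>RF. (\<forall>s. fst RF s \<in> sets M) \<and> shrinking_scheme (snd RF) \<and>
      E k = suslin_op (\<lambda>s. fst RF s \<times> snd RF s)" for k
  proof -
    obtain R F where "\<forall>s. R s \<in> sets M" "shrinking_scheme F" "E k = suslin_op (\<lambda>s. R s \<times> F s)"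
      using assms[of k] unfolding suslin_rect_sets_def by blast
    then show ?thesis
      by (intro exI[of _ "(R, F)"]) simp
  qed
  then obtain RF where "\<forall>k. (\<forall>s. fst (RF k) s \<in> sets M) \<and> shrinking_scheme (snd (RF k)) \<and>
      E k = suslin_op (\<lambda>s. fst (RF k) s \<times> snd (RF k) s)"
    by (rule choice[OF allI, THEN exE])
  then show ?thesis
    by (intro exI[of _ "\<lambda>k. fst (RF k)"] exI[of _ "\<lambda>k. snd (RF k)"]) simp
qed

lemma shrinking_scheme_common_point:
  assumes F: "shrinking_scheme F" and ne: "\<And>n. (\<Inter>j\<le>n. F (seq_prefix \<sigma> j)) \<noteq> {}"
  shows "\<exists>y. \<forall>n. y \<in> F (seq_prefix \<sigma> n)"
proof -
  define C where "C n = (\<Inter>j\<le>n. F (seq_prefix \<sigma> j))" for n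
  have "(\<forall>n. closedin mtopology (C n)) \<and> (\<forall>n. C n \<noteq> {}) \<and> decseq C \<and>
      (\<forall>e>0. \<exists>n a. C n \<subseteq> mcball a e)"
  proof (intro conjI allI impI)
    show "closedin mtopology (C n)" for n
      using F unfolding C_def shrinking_scheme_def by (intro closedin_Inter) auto
    show "C n \<noteq> {}" for n
      using ne unfolding C_def by blast
    show "decseq C"
      unfolding C_def decseq_def by (intro allI impI INF_superset_mono) auto
    show "\<exists>n a. C n \<subseteq> mcball a e" if e: "0 < e" for e
    proof -
      obtain n a where "F (seq_prefix \<sigma> n) \<subseteq> mcball a e"
        using F e unfolding shrinking_scheme_def by blast
      then show ?thesis
        unfolding C_def by blast
    qed
  qed
  then have "\<Inter> (range C) \<noteq> {}"
    using complete unfolding mcomplete_nest by blast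
  then show ?thesis
    unfolding C_def by blast
qed

lemma fst_suslin_rect_set:
  assumes "E \<in> suslin_rect_sets M"
  shows "\<exists>A. (\<forall>s. A s \<in> sets M) \<and> fst ` E = suslin_op A"
proof -
  obtain R F where R: "\<And>s. R s \<in> sets M" and F: "shrinking_scheme F"
    and E: "E = suslin_op (\<lambda>s. R s \<times> F s)"
    using assms unfolding suslin_rect_sets_def by blast
  define A where "A s = (if (\<Inter>j\<le>length s. F (take j s)) = {} then {} else R s)" for s
  have A_seq_prefix: "A (seq_prefix \<sigma> n)
      = (if (\<Inter>j\<le>n. F (seq_prefix \<sigma> j)) = {} then {} else R (seq_prefix \<sigma> n))" for \<sigma> n
  proof -
    have "(\<Inter>j\<le>length (seq_prefix \<sigma> n). F (take j (seq_prefix \<sigma> n))) = (\<Inter>j\<le>n. F (seq_prefix \<sigma> j))"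
      by (rule INF_cong) (simp_all add: take_seq_prefix)
    then show ?thesis
      by (simp add: A_def)
  qed
  have "fst ` E = suslin_op A"
  proof (intro equalityI subsetI)
    fix \<xi> assume "\<xi> \<in> fst ` E"
    then obtain y \<sigma> where "\<And>n. \<xi> \<in> R (seq_prefix \<sigma> n) \<and> y \<in> F (seq_prefix \<sigma> n)"
      unfolding E suslin_op_def by force
    then have "\<xi> \<in> A (seq_prefix \<sigma> n)" for n
      unfolding A_seq_prefix by auto
    then show "\<xi> \<in> suslin_op A"
      unfolding suslin_op_def by blast
  next
    fix \<xi> assume "\<xi> \<in> suslin_op A"
    then obtain \<sigma> where \<sigma>: "\<And>n. \<xi> \<in> A (seq_prefix \<sigma> n)"
      unfolding suslin_op_def by blast
    have "(\<Inter>j\<le>n. F (seq_prefix \<sigma> j)) \<noteq> {}" and R\<sigma>: "\<xi> \<in> R (seq_prefix \<sigma> n)" for n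
      using \<sigma>[of n] unfolding A_seq_prefix by (auto split: if_splits)
    then obtain y where "\<And>n. y \<in> F (seq_prefix \<sigma> n)"
      using shrinking_scheme_common_point[OF F] by blast
    with R\<sigma> have "(\<xi>, y) \<in> E"
      unfolding E suslin_op_def by blast
    then show "\<xi> \<in> fst ` E"
      by force
  qed
  moreover have "A s \<in> sets M" for s
    using R unfolding A_def by simp
  ultimately show ?thesis
    by blast
qed

lemma closed_shrinking_scheme:
  assumes F: "closedin mtopology F"
  shows "\<exists>G. shrinking_scheme G \<and> (\<forall>s. G s \<subseteq> F) \<and> (\<forall>y\<in>F. \<exists>\<sigma>. \<forall>n. y \<in> G (seq_prefix \<sigma> n))"
proof -
  obtain c :: "nat \<Rightarrow> 'y" where c: "\<forall>y\<in>S. \<forall>e>0. \<exists>i. c i \<in> mball y e"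
    using dense_sequence by blast
  define G where "G s = (if s = [] then F else F \<inter> mcball (c (last s)) (1 / length s))" for s
  have G_Suc: "G (seq_prefix \<sigma> (Suc n)) = F \<inter> mcball (c (\<sigma> n)) (1 / Suc n)" for \<sigma> n
    by (simp add: G_def seq_prefix_Suc)
  have "shrinking_scheme G"
    unfolding shrinking_scheme_def
  proof (intro conjI allI impI)
    show "closedin mtopology (G s)" for s
      using F by (simp add: G_def closedin_Int)
    show "\<exists>n a. G (seq_prefix \<sigma> n) \<subseteq> mcball a e" if e: "0 < e" for \<sigma> e
    proof -
      obtain n where "1 / real (Suc n) < e"
        using nat_approx_posE[OF e] by blast
      then have "G (seq_prefix \<sigma> (Suc n)) \<subseteq> mcball (c (\<sigma> n)) e"
        unfolding G_Suc using mcball_subset_concentric[of "1 / Suc n" e] by auto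
      then show ?thesis by blast
    qed
  qed
  moreover have "\<exists>\<sigma>. \<forall>n. y \<in> G (seq_prefix \<sigma> n)" if y: "y \<in> F" for y
  proof -
    have "\<forall>n. \<exists>i. c i \<in> mball y (1 / Suc n)"
      using c y closedin_subset[OF F] by auto
    then obtain \<sigma> where \<sigma>: "\<And>n. c (\<sigma> n) \<in> mball y (1 / Suc n)"
      by metis
    have "y \<in> G (seq_prefix \<sigma> n)" for n
      using y \<sigma>[of "n - 1"] by (cases n) (simp add: G_def, auto simp: G_Suc commute less_imp_le)
    then show ?thesis by blast
  qed
  moreover have "G s \<subseteq> F" for s
    by (simp add: G_def)
  ultimately show ?thesis
    by blast
qed

lemma Times_closed_in_suslin_rect_sets:
  assumes a: "a \<in> sets M" and F: "closedin mtopology F"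
  shows "a \<times> F \<in> suslin_rect_sets M"
proof -
  obtain G where G: "shrinking_scheme G" "\<And>s. G s \<subseteq> F" "\<And>y. y \<in> F \<Longrightarrow> \<exists>\<sigma>. \<forall>n. y \<in> G (seq_prefix \<sigma> n)"
    using closed_shrinking_scheme[OF F] by blast
  have "a \<times> F = suslin_op (\<lambda>s. a \<times> G s)"
  proof (intro equalityI subsetI)
    fix p assume "p \<in> a \<times> F"
    then show "p \<in> suslin_op (\<lambda>s. a \<times> G s)"
      using G(3)[of "snd p"] unfolding suslin_op_def by (auto simp: mem_Times_iff)
  next
    fix p assume "p \<in> suslin_op (\<lambda>s. a \<times> G s)"
    then show "p \<in> a \<times> F"
      using G(2) unfolding suslin_op_def by blast
  qed
  then show ?thesis
    using a G(1) suslin_rect_setsI[of "\<lambda>_. a" M G] by simp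
qed

lemma UN_in_suslin_rect_sets:
  assumes "\<And>k::nat. E k \<in> suslin_rect_sets M"
  shows "(\<Union>k. E k) \<in> suslin_rect_sets M"
proof -
  obtain R F where R: "\<And>k s. R k s \<in> sets M" and F: "\<And>k. shrinking_scheme (F k)"
    and E: "\<And>k. E k = suslin_op (\<lambda>s. R k s \<times> F k s)"
    using suslin_rect_sets_choice[of E, OF assms] by blast
  define R' where "R' s = (case s of [] \<Rightarrow> space M | k # t \<Rightarrow> R k t)" for s
  define F' where "F' s = (case s of [] \<Rightarrow> S | k # t \<Rightarrow> F k t)" for s
  have "(\<Union>k. E k) = suslin_op (\<lambda>s. case s of [] \<Rightarrow> space M \<times> S | k # t \<Rightarrow> R k t \<times> F k t)"
    unfolding E using R F sets.sets_into_space closedin_subset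
    by (intro suslin_op_UN) (fastforce simp: shrinking_scheme_def)
  also have "\<dots> = suslin_op (\<lambda>s. R' s \<times> F' s)"
    by (rule arg_cong[where f=suslin_op], rule ext) (simp add: R'_def F'_def split: list.split)
  finally have "(\<Union>k. E k) = suslin_op (\<lambda>s. R' s \<times> F' s)" .
  moreover have "shrinking_scheme F'"
    unfolding shrinking_scheme_def
  proof (intro conjI allI impI)
    show "closedin mtopology (F' s)" for s
      using F unfolding F'_def shrinking_scheme_def by (simp split: list.split)
    show "\<exists>n a. F' (seq_prefix \<sigma> n) \<subseteq> mcball a e" if e: "0 < e" for \<sigma> e
    proof -
      obtain n a where "F (\<sigma> 0) (seq_prefix (\<lambda>i. \<sigma> (Suc i)) n) \<subseteq> mcball a e"
        using F e unfolding shrinking_scheme_def by blast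
      then have "F' (seq_prefix \<sigma> (Suc n)) \<subseteq> mcball a e"
        by (simp add: F'_def seq_prefix_Suc_Cons)
      then show ?thesis by blast
    qed
  qed
  moreover have "R' s \<in> sets M" for s
    using R by (simp add: R'_def split: list.split)
  ultimately show ?thesis
    by (simp add: suslin_rect_setsI)
qed

lemma INT_in_suslin_rect_sets:
  assumes "\<And>k::nat. E k \<in> suslin_rect_sets M"
  shows "(\<Inter>k. E k) \<in> suslin_rect_sets M"
proof -
  obtain R F where R: "\<And>k s. R k s \<in> sets M" and F: "\<And>k. shrinking_scheme (F k)"
    and E: "\<And>k. E k = suslin_op (\<lambda>s. R k s \<times> F k s)"
    using suslin_rect_sets_choice[of E, OF assms] by blast
  have "(\<Inter>k. E k) = suslin_op (interleave (\<lambda>k s. R k s \<times> F k s))"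
    unfolding E by (rule suslin_op_INT)
  also have "interleave (\<lambda>k s. R k s \<times> F k s) = (\<lambda>s. interleave R s \<times> interleave F s)"
    by (auto simp: interleave_def split: prod.split)
  finally have "(\<Inter>k. E k) = suslin_op (\<lambda>s. interleave R s \<times> interleave F s)" .
  moreover have "shrinking_scheme (interleave F)"
    unfolding shrinking_scheme_def
  proof (intro conjI allI impI)
    show "closedin mtopology (interleave F s)" for s
      using F unfolding interleave_def shrinking_scheme_def by (simp split: prod.split)
    show "\<exists>n a. interleave F (seq_prefix \<tau> n) \<subseteq> mcball a e" if e: "0 < e" for \<tau> e
    proof -
      obtain n a where "F 0 (seq_prefix (\<lambda>i. \<tau> (prod_encode (0, i))) n) \<subseteq> mcball a e"
        using F e unfolding shrinking_scheme_def by blast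
      then show ?thesis
        by (metis interleave_seq_prefix)
    qed
  qed
  moreover have "interleave R s \<in> sets M" for s
    using R by (simp add: interleave_def split: prod.split)
  ultimately show ?thesis
    by (simp add: suslin_rect_setsI)
qed

lemma Un_in_suslin_rect_sets:
  assumes "E1 \<in> suslin_rect_sets M" "E2 \<in> suslin_rect_sets M"
  shows "E1 \<union> E2 \<in> suslin_rect_sets M"
proof -
  have "(\<Union>k. if k = (0::nat) then E1 else E2) \<in> suslin_rect_sets M"
    using assms by (intro UN_in_suslin_rect_sets) simp
  moreover have "(\<Union>k. if k = (0::nat) then E1 else E2) = E1 \<union> E2"
    by (auto split: if_splits)
  ultimately show ?thesis by simp
qed

lemma Times_open_in_suslin_rect_sets:
  assumes a: "a \<in> sets M" and U: "openin mtopology U"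
  shows "a \<times> U \<in> suslin_rect_sets M"
proof -
  obtain C :: "nat \<Rightarrow> 'y set" where C: "\<And>n. closedin mtopology (C n)" "U = (\<Union>n. C n)"
    using open_imp_fsigma_in[OF metrizable_space_mtopology U] unfolding fsigma_in_ascending by metis
  then have "a \<times> U = (\<Union>n. a \<times> C n)"
    by blast
  also have "\<dots> \<in> suslin_rect_sets M"
    using a C(1) by (intro UN_in_suslin_rect_sets Times_closed_in_suslin_rect_sets)
  finally show ?thesis .
qed

lemma sigma_sets_subset_suslin_rect_sets:
  "sigma_sets (space M \<times> S) {a \<times> U | a U. a \<in> sets M \<and> openin mtopology U} \<subseteq> suslin_rect_sets M"
proof
  let ?\<Omega> = "space M \<times> S"
  have \<Omega>: "?\<Omega> \<in> suslin_rect_sets M"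
    by (intro Times_closed_in_suslin_rect_sets) auto
  have generators: "{a \<times> U | a U. a \<in> sets M \<and> openin mtopology U} \<subseteq> Pow ?\<Omega>"
  proof
    fix X assume "X \<in> {a \<times> U | a U. a \<in> sets M \<and> openin mtopology U}"
    then obtain a U where "X = a \<times> U" "a \<in> sets M" "openin mtopology U"
      by blast
    then show "X \<in> Pow ?\<Omega>"
      using sets.sets_into_space[of a M] openin_subset[of mtopology U] by auto
  qed
  fix D assume "D \<in> sigma_sets ?\<Omega> {a \<times> U | a U. a \<in> sets M \<and> openin mtopology U}"
  then have "D \<in> suslin_rect_sets M \<and> ?\<Omega> - D \<in> suslin_rect_sets M"
  proof induction
    case (Basic D)
    then obtain a U where D: "D = a \<times> U" "a \<in> sets M" "openin mtopology U"
      by blast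
    have "?\<Omega> - D = (space M - a) \<times> S \<union> a \<times> (S - U)"
      using D sets.sets_into_space[of a M] by auto
    moreover have "(space M - a) \<times> S \<union> a \<times> (S - U) \<in> suslin_rect_sets M"
      using D by (intro Un_in_suslin_rect_sets Times_closed_in_suslin_rect_sets) auto
    ultimately show ?case
      using D by (simp add: Times_open_in_suslin_rect_sets)
  next
    case Empty
    show ?case
      using \<Omega> Times_closed_in_suslin_rect_sets[of "{}" M "{}"] by simp
  next
    case (Compl D)
    have "D \<subseteq> ?\<Omega>"
      using sigma_sets_into_sp[OF generators Compl.hyps] .
    then have "?\<Omega> - (?\<Omega> - D) = D"
      by blast
    then show ?case
      using Compl.IH by simp
  next
    case (Union D)
    have "?\<Omega> - (\<Union>i. D i) = (\<Inter>i. ?\<Omega> - D i)"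
      by blast
    moreover have "(\<Inter>i. ?\<Omega> - D i) \<in> suslin_rect_sets M"
      using Union.IH by (intro INT_in_suslin_rect_sets) blast
    moreover have "(\<Union>i. D i) \<in> suslin_rect_sets M"
      using Union.IH by (intro UN_in_suslin_rect_sets) blast
    ultimately show ?case
      by simp
  qed
  then show "D \<in> suslin_rect_sets M" ..
qed

lemma vimage_in_suslin_rect_sets:
  fixes g :: "'y \<Rightarrow> 'b::topological_space"
  assumes g: "continuous_map mtopology euclidean g" and D: "D \<in> sets (M \<Otimes>\<^sub>M borel)"
  shows "(\<lambda>(\<xi>, y). (\<xi>, g y)) -` D \<inter> (space M \<times> S) \<in> suslin_rect_sets M"
proof -
  define \<Omega> where "\<Omega> = space M \<times> S"
  define X :: "'a \<times> 'y \<Rightarrow> 'a \<times> 'b" where "X = (\<lambda>(\<xi>, y). (\<xi>, g y))"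
  let ?G = "{a \<times> b | a (b :: 'b set). a \<in> sets M \<and> open b}"
  have X: "X \<in> \<Omega> \<rightarrow> space M \<times> UNIV"
    by (auto simp: X_def \<Omega>_def)
  have "D \<in> sigma_sets (space M \<times> UNIV) ?G"
    using D by (simp add: sets_pair_measure_borel)
  then have "X -` D \<inter> \<Omega> \<in> {X -` G \<inter> \<Omega> | G. G \<in> sigma_sets (space M \<times> UNIV) ?G}"
    by blast
  also have "\<dots> = sigma_sets \<Omega> {X -` G \<inter> \<Omega> | G. G \<in> ?G}"
    by (rule sigma_sets_vimage_commute[OF X])
  also have "\<dots> \<subseteq> sigma_sets \<Omega> {a \<times> U | a U. a \<in> sets M \<and> openin mtopology U}"
  proof (rule sigma_sets_mono', safe)
    fix a and b :: "'b set" assume ab: "a \<in> sets M" "open b"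
    have "openin mtopology {y \<in> topspace mtopology. g y \<in> b}"
      using g ab(2) by (intro openin_continuous_map_preimage) auto
    moreover have "X -` (a \<times> b) \<inter> \<Omega> = a \<times> {y \<in> topspace mtopology. g y \<in> b}"
      using sets.sets_into_space[OF ab(1)] by (auto simp: X_def \<Omega>_def)
    ultimately show "\<exists>a' U. X -` (a \<times> b) \<inter> \<Omega> = a' \<times> U \<and> a' \<in> sets M \<and> openin mtopology U"
      using ab(1) by blast
  qed
  also have "\<dots> \<subseteq> suslin_rect_sets M"
    unfolding \<Omega>_def by (rule sigma_sets_subset_suslin_rect_sets)
  finally show ?thesis
    unfolding X_def \<Omega>_def .
qed

end

theorem measurable_projection:
  fixes D :: "('a \<times> 'b::topological_space) set"
  assumes suslin: "suslin_space (euclidean :: 'b topology)"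
    and D: "D \<in> sets (M \<Otimes>\<^sub>M borel)"
    and Q: "sigma_finite_measure Q" "sets Q = sets M"
  shows "fst ` D \<in> sets (completion Q)"
proof -
  obtain Y :: "(nat \<Rightarrow> real) topology" and g :: "(nat \<Rightarrow> real) \<Rightarrow> 'b"
    where Y: "completely_metrizable_space Y" "separable_space Y"
      and g: "continuous_map Y euclidean g" "g ` topspace Y = UNIV"
    using suslin unfolding suslin_space_def by auto
  obtain S d where Sd: "Metric_space S d" "Metric_space.mcomplete S d" "Y = Metric_space.mtopology S d"
    using Y(1) unfolding completely_metrizable_space_def by blast
  interpret complete_separable_metric S d
    using Sd Y(2) by (simp add: complete_separable_metric_def complete_separable_metric_axioms_def)
  let ?D = "(\<lambda>(\<xi>, y). (\<xi>, g y)) -` D \<inter> (space M \<times> S)"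
  have "?D \<in> suslin_rect_sets M"
    using g(1) Sd(3) D by (intro vimage_in_suslin_rect_sets) auto
  then have "\<exists>A. (\<forall>s. A s \<in> sets M) \<and> fst ` ?D = suslin_op A"
    by (rule fst_suslin_rect_set)
  then obtain A where A: "\<And>s. A s \<in> sets M" "fst ` ?D = suslin_op A"
    by blast
  have "fst ` ?D = fst ` D"
  proof (intro equalityI subsetI)
    fix \<xi> assume "\<xi> \<in> fst ` D"
    then obtain x where x: "(\<xi>, x) \<in> D"
      by force
    then have "\<xi> \<in> space M"
      using sets.sets_into_space[OF D] by (auto simp: space_pair_measure)
    moreover obtain y where "y \<in> S" "g y = x"
      using g(2) Sd(3) by (metis UNIV_I imageE topspace_mtopology)
    ultimately show "\<xi> \<in> fst ` ?D"
      using x by (auto intro!: image_eqI[of _ _ "(\<xi>, y)"])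
  qed force
  then have "fst ` D = suslin_op A"
    using A(2) by simp
  also have "\<dots> \<in> sets (completion Q)"
    using A(1) Q(2) by (intro sigma_finite_measure.suslin_op_in_completion[OF Q(1)]) simp
  finally show ?thesis .
qed

section \<open>Pasch--Hausdorff envelopes\<close>

lemma envelope_le: "envelope f \<kappa> \<xi> x \<le> f \<xi> x"
  unfolding envelope_def by (rule INF_lower2[of x]) (simp_all add: zero_ereal_def[symmetric])

lemma envelope_lipschitz:
  assumes "0 \<le> \<kappa>"
  shows "envelope f \<kappa> \<xi> x \<le> envelope f \<kappa> \<xi> y + ereal (\<kappa> * dist x y)"
proof -
  have "envelope f \<kappa> \<xi> x \<le> f \<xi> x' + ereal \<kappa> * ereal (dist y x') + ereal (\<kappa> * dist x y)" for x'
  proof -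
    have "\<kappa> * dist x x' \<le> \<kappa> * dist y x' + \<kappa> * dist x y"
      using mult_left_mono[OF dist_triangle[of x x' y] assms] by (simp add: dist_commute algebra_simps)
    then have "f \<xi> x' + ereal \<kappa> * ereal (dist x x') \<le> f \<xi> x' + ereal \<kappa> * ereal (dist y x') + ereal (\<kappa> * dist x y)"
      by (cases "f \<xi> x'") auto
    then show ?thesis
      unfolding envelope_def by (rule INF_lower2[OF UNIV_I])
  qed
  then have "envelope f \<kappa> \<xi> x - ereal (\<kappa> * dist x y) \<le> envelope f \<kappa> \<xi> y"
    unfolding envelope_def[of f \<kappa> \<xi> y] by (intro INF_greatest) (simp add: ereal_minus_le_iff)
  then show ?thesis
    by (simp add: ereal_minus_le_iff)
qed

lemma envelope_mono:
  assumes "\<kappa> \<le> \<kappa>'"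
  shows "envelope f \<kappa> \<xi> x \<le> envelope f \<kappa>' \<xi> x"
  unfolding envelope_def
proof (rule INF_mono)
  fix x'
  have "\<kappa> * dist x x' \<le> \<kappa>' * dist x x'"
    using assms by (intro mult_right_mono) auto
  then have "f \<xi> x' + ereal \<kappa> * ereal (dist x x') \<le> f \<xi> x' + ereal \<kappa>' * ereal (dist x x')"
    by (cases "f \<xi> x'") auto
  then show "\<exists>x''\<in>UNIV. f \<xi> x'' + ereal \<kappa> * ereal (dist x x'') \<le> f \<xi> x' + ereal \<kappa>' * ereal (dist x x')"
    by blast
qed

lemma ereal_le_add_nat_mult:
  fixes t m :: ereal
  assumes "m \<noteq> -\<infinity>" "t \<noteq> \<infinity>" "0 < r"
  shows "\<exists>k::nat. t \<le> m + ereal (real k * r)"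
proof (cases "t = -\<infinity> \<or> m = \<infinity>")
  case False
  then obtain tr mr where tm: "t = ereal tr" "m = ereal mr"
    using assms by (cases t; cases m) auto
  obtain k :: nat where "(tr - mr) / r \<le> real k"
    using real_arch_simple by blast
  then show ?thesis
    using assms(3) tm by (intro exI[of _ k]) (simp add: divide_le_eq)
qed auto

text \<open>For a lower semicontinuous \<open>f \<xi>\<close> the envelopes increase to \<open>f \<xi>\<close>: near \<open>x\<close> the
  function is already above a given level \<open>t < f \<xi> x\<close>, and far from \<open>x\<close> a large Lipschitz
  constant lifts the finite envelope above \<open>t\<close>.\<close>
lemma SUP_envelope:
  assumes lsc: "lsc (f \<xi>)" and \<kappa>: "0 \<le> \<kappa>" and fin: "envelope f \<kappa> \<xi> x \<noteq> -\<infinity>"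
  shows "(SUP k::nat. envelope f (\<kappa> + real k) \<xi> x) = f \<xi> x"
proof (rule antisym)
  show "(SUP k::nat. envelope f (\<kappa> + real k) \<xi> x) \<le> f \<xi> x"
    by (rule SUP_least) (rule envelope_le)
  show "f \<xi> x \<le> (SUP k::nat. envelope f (\<kappa> + real k) \<xi> x)"
  proof (rule dense_le)
    fix t assume t: "t < f \<xi> x"
    have "open {z. t < f \<xi> z}"
      using lsc unfolding lsc_def by blast
    then obtain r where r: "0 < r" "ball x r \<subseteq> {z. t < f \<xi> z}"
      using t open_contains_ball by blast
    have "\<exists>k::nat. t \<le> envelope f \<kappa> \<xi> x + ereal (real k * r)"
      using fin t r(1) by (intro ereal_le_add_nat_mult) auto
    then obtain k :: nat where k: "t \<le> envelope f \<kappa> \<xi> x + ereal (real k * r)"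
      by blast
    have "t \<le> f \<xi> x' + ereal (\<kappa> + real k) * ereal (dist x x')" for x'
    proof (cases "dist x x' < r")
      case True
      then have "t < f \<xi> x'"
        using r(2) by auto
      also have "f \<xi> x' \<le> f \<xi> x' + ereal (\<kappa> + real k) * ereal (dist x x')"
        using \<kappa> by (cases "f \<xi> x'") auto
      finally show ?thesis by simp
    next
      case False
      have "envelope f \<kappa> \<xi> x \<le> f \<xi> x' + ereal \<kappa> * ereal (dist x x')"
        unfolding envelope_def by (rule INF_lower) simp
      moreover have "real k * r \<le> real k * dist x x'"
        using False by (intro mult_left_mono) auto
      ultimately have "t \<le> f \<xi> x' + ereal \<kappa> * ereal (dist x x') + ereal (real k * dist x x')"
        using k by (meson add_mono ereal_less_eq(3) order_trans)
      also have "\<dots> = f \<xi> x' + ereal (\<kappa> + real k) * ereal (dist x x')"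
        by (cases "f \<xi> x'") (auto simp: algebra_simps)
      finally show ?thesis .
    qed
    then have "t \<le> envelope f (\<kappa> + real k) \<xi> x"
      unfolding envelope_def by (rule INF_greatest)
    also have "\<dots> \<le> (SUP k::nat. envelope f (\<kappa> + real k) \<xi> x)"
      by (rule SUP_upper) simp
    finally show "t \<le> (SUP k::nat. envelope f (\<kappa> + real k) \<xi> x)" .
  qed
qed

lemma envelope_measurable_completion:
  fixes f :: "'a \<Rightarrow> 'b::metric_space \<Rightarrow> ereal"
  assumes suslin: "suslin_space (euclidean :: 'b topology)"
    and f: "(\<lambda>(\<xi>, x). f \<xi> x) \<in> borel_measurable (M \<Otimes>\<^sub>M borel)"
    and Q: "sigma_finite_measure Q" "sets Q = sets M"
  shows "(\<lambda>\<xi>. envelope f \<kappa> \<xi> x) \<in> borel_measurable (completion Q)"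
proof (rule borel_measurableI_less)
  fix a :: ereal
  define D where "D = {p \<in> space (M \<Otimes>\<^sub>M borel). f (fst p) (snd p) + ereal \<kappa> * ereal (dist x (snd p)) < a}"
  have [measurable]: "(\<lambda>p. f (fst p) (snd p)) \<in> borel_measurable (M \<Otimes>\<^sub>M borel)"
    using f by (simp add: case_prod_beta')
  have [measurable]: "(\<lambda>y. dist x y) \<in> borel_measurable borel"
    by (intro borel_measurable_continuous_onI continuous_intros)
  have "D \<in> sets (M \<Otimes>\<^sub>M borel)"
    unfolding D_def by measurable
  moreover have "{\<xi> \<in> space (completion Q). envelope f \<kappa> \<xi> x < a} = fst ` D"
    using sets_eq_imp_space_eq[OF Q(2)]
    by (force simp: D_def envelope_def INF_less_iff space_pair_measure)
  ultimately show "{\<xi> \<in> space (completion Q). envelope f \<kappa> \<xi> x < a} \<in> sets (completion Q)"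
    using measurable_projection[OF suslin _ Q] by simp
qed

section \<open>Extended expectation\<close>

definition pos_part_integral :: "'a measure \<Rightarrow> ('a \<Rightarrow> ereal) \<Rightarrow> ennreal" where
  "pos_part_integral Q g = (\<integral>\<^sup>+ \<xi>. e2ennreal (max (g \<xi>) 0) \<partial>completion Q)"

lemma EE_pos_part_integral:
  "EE Q g = enn2ereal (pos_part_integral Q g) - enn2ereal (pos_part_integral Q (\<lambda>\<xi>. - g \<xi>))"
  by (simp add: EE_def pos_part_integral_def)

lemma pos_part_integral_mono:
  "(\<And>\<xi>. g \<xi> \<le> h \<xi>) \<Longrightarrow> pos_part_integral Q g \<le> pos_part_integral Q h"
  unfolding pos_part_integral_def by (intro nn_integral_mono e2ennreal_mono max.mono order_refl)

lemma EE_mono: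
  assumes "\<And>\<xi>. g \<xi> \<le> h \<xi>"
  shows "EE Q g \<le> EE Q h"
  unfolding EE_pos_part_integral
proof (rule ereal_minus_mono)
  show "enn2ereal (pos_part_integral Q g) \<le> enn2ereal (pos_part_integral Q h)"
    using pos_part_integral_mono[of g h] assms by (simp add: less_eq_ennreal.rep_eq)
  show "enn2ereal (pos_part_integral Q (\<lambda>\<xi>. - h \<xi>)) \<le> enn2ereal (pos_part_integral Q (\<lambda>\<xi>. - g \<xi>))"
    using pos_part_integral_mono[of "\<lambda>\<xi>. - h \<xi>" "\<lambda>\<xi>. - g \<xi>"] assms
    by (simp add: less_eq_ennreal.rep_eq)
qed

lemma pos_part_integral_le_add:
  assumes Q: "prob_space Q" and h: "h \<in> borel_measurable (completion Q)"
    and le: "\<And>\<xi>. g \<xi> \<le> h \<xi> + ereal c" and c: "0 \<le> c"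
  shows "pos_part_integral Q g \<le> pos_part_integral Q h + ennreal c"
proof -
  have "e2ennreal (max (g \<xi>) 0) \<le> e2ennreal (max (h \<xi>) 0) + ennreal c" for \<xi>
  proof -
    have "max (g \<xi>) 0 \<le> max (h \<xi>) 0 + ereal c"
      using le[of \<xi>] c by (cases "g \<xi>"; cases "h \<xi>") (auto simp: max_def)
    then show ?thesis
      using c by (simp add: less_eq_ennreal.rep_eq plus_ennreal.rep_eq enn2ereal_e2ennreal)
  qed
  then have "pos_part_integral Q g \<le> (\<integral>\<^sup>+ \<xi>. e2ennreal (max (h \<xi>) 0) + ennreal c \<partial>completion Q)"
    unfolding pos_part_integral_def by (rule nn_integral_mono)
  also have "\<dots> = pos_part_integral Q h + ennreal c"
    using h prob_space.emeasure_space_1[OF Q] unfolding pos_part_integral_def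
    by (subst nn_integral_add) auto
  finally show ?thesis .
qed

lemma ereal_minus_le_minus_add:
  fixes a b a' b' :: ereal
  assumes "0 \<le> a" "0 \<le> b" "0 \<le> a'" "0 \<le> b'" "a \<le> a' + ereal c" "b' \<le> b + ereal c" "0 \<le> c"
  shows "a - b \<le> a' - b' + ereal (2 * c)"
  using assms by (cases a; cases b; cases a'; cases b') auto

text \<open>Bounding the positive and the negative part separately costs the constant twice.\<close>
lemma EE_le_add:
  assumes Q: "prob_space Q"
    and g: "g \<in> borel_measurable (completion Q)" and h: "h \<in> borel_measurable (completion Q)"
    and le: "\<And>\<xi>. g \<xi> \<le> h \<xi> + ereal c" and c: "0 \<le> c"
  shows "EE Q g \<le> EE Q h + ereal (2 * c)"
proof -
  have pos: "enn2ereal (pos_part_integral Q g) \<le> enn2ereal (pos_part_integral Q h) + ereal c"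
    using pos_part_integral_le_add[OF Q h le c] c
    by (simp add: less_eq_ennreal.rep_eq plus_ennreal.rep_eq)
  have "- h \<xi> \<le> - g \<xi> + ereal c" for \<xi>
    using le[of \<xi>] by (cases "g \<xi>"; cases "h \<xi>") auto
  then have neg: "enn2ereal (pos_part_integral Q (\<lambda>\<xi>. - h \<xi>))
      \<le> enn2ereal (pos_part_integral Q (\<lambda>\<xi>. - g \<xi>)) + ereal c"
    using pos_part_integral_le_add[OF Q, of "\<lambda>\<xi>. - g \<xi>"] g c
    by (simp add: less_eq_ennreal.rep_eq plus_ennreal.rep_eq borel_measurable_uminus_eq_ereal)
  show ?thesis
    unfolding EE_pos_part_integral using pos neg c by (intro ereal_minus_le_minus_add) auto
qed

lemma e2ennreal_max_SUP_incseq: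
  fixes X :: "nat \<Rightarrow> ereal"
  assumes "incseq X"
  shows "e2ennreal (max (SUP k. X k) 0) = (SUP k. e2ennreal (max (X k) 0))"
proof -
  have "incseq (\<lambda>k. e2ennreal (max (X k) 0))"
    using assms by (auto simp: incseq_def intro!: e2ennreal_mono max.mono)
  moreover have "(\<lambda>k. e2ennreal (max (X k) 0)) \<longlonglongrightarrow> e2ennreal (max (SUP k. X k) 0)"
    using LIMSEQ_SUP[OF assms] by (intro tendsto_intros)
  ultimately show ?thesis
    using LIMSEQ_SUP LIMSEQ_unique by blast
qed

lemma e2ennreal_max_INF_decseq:
  fixes X :: "nat \<Rightarrow> ereal"
  assumes "decseq X"
  shows "e2ennreal (max (INF k. X k) 0) = (INF k. e2ennreal (max (X k) 0))"
proof -
  have "decseq (\<lambda>k. e2ennreal (max (X k) 0))"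
    using assms by (auto simp: decseq_def intro!: e2ennreal_mono max.mono)
  moreover have "(\<lambda>k. e2ennreal (max (X k) 0)) \<longlonglongrightarrow> e2ennreal (max (INF k. X k) 0)"
    using LIMSEQ_INF[OF assms] by (intro tendsto_intros)
  ultimately show ?thesis
    using LIMSEQ_INF LIMSEQ_unique by blast
qed

lemma pos_part_integral_SUP:
  assumes g: "\<And>k. g k \<in> borel_measurable (completion Q)"
    and inc: "\<And>k \<xi>. g k \<xi> \<le> g (Suc k) \<xi>"
    and lim: "AE \<xi> in completion Q. (SUP k. g k \<xi>) = h \<xi>"
  shows "pos_part_integral Q h = (SUP k. pos_part_integral Q (g k))"
proof -
  from lim have "AE \<xi> in completion Q. e2ennreal (max (h \<xi>) 0) = (SUP k. e2ennreal (max (g k \<xi>) 0))"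
  proof eventually_elim
    case (elim \<xi>)
    have "incseq (\<lambda>k. g k \<xi>)"
      using inc by (intro incseq_SucI)
    then show ?case
      using elim e2ennreal_max_SUP_incseq[of "\<lambda>k. g k \<xi>"] by simp
  qed
  then have "pos_part_integral Q h = (\<integral>\<^sup>+ \<xi>. (SUP k. e2ennreal (max (g k \<xi>) 0)) \<partial>completion Q)"
    unfolding pos_part_integral_def by (rule nn_integral_cong_AE)
  also have "\<dots> = (SUP k. pos_part_integral Q (g k))"
    unfolding pos_part_integral_def using g inc
    by (intro nn_integral_monotone_convergence_SUP incseq_SucI le_funI e2ennreal_mono max.mono) auto
  finally show ?thesis .
qed

lemma pos_part_integral_INF:
  assumes g: "\<And>k. g k \<in> borel_measurable (completion Q)"
    and dec: "\<And>k \<xi>. g (Suc k) \<xi> \<le> g k \<xi>"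
    and lim: "AE \<xi> in completion Q. (INF k. g k \<xi>) = h \<xi>"
    and fin: "pos_part_integral Q (g 0) \<noteq> \<infinity>"
  shows "pos_part_integral Q h = (INF k. pos_part_integral Q (g k))"
proof -
  from lim have "AE \<xi> in completion Q. e2ennreal (max (h \<xi>) 0) = (INF k. e2ennreal (max (g k \<xi>) 0))"
  proof eventually_elim
    case (elim \<xi>)
    have "decseq (\<lambda>k. g k \<xi>)"
      using dec by (intro decseq_SucI)
    then show ?case
      using elim e2ennreal_max_INF_decseq[of "\<lambda>k. g k \<xi>"] by simp
  qed
  then have "pos_part_integral Q h = (\<integral>\<^sup>+ \<xi>. (INF k. e2ennreal (max (g k \<xi>) 0)) \<partial>completion Q)"
    unfolding pos_part_integral_def by (rule nn_integral_cong_AE)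
  also have "\<dots> = (INF k. pos_part_integral Q (g k))"
    unfolding pos_part_integral_def
  proof (rule nn_integral_monotone_convergence_INF_AE')
    show "AE \<xi> in completion Q. e2ennreal (max (g (Suc k) \<xi>) 0) \<le> e2ennreal (max (g k \<xi>) 0)" for k
      using dec by (intro AE_I2 e2ennreal_mono max.mono) auto
    show "(\<lambda>\<xi>. e2ennreal (max (g k \<xi>) 0)) \<in> borel_measurable (completion Q)" for k
      using g by measurable
    show "(\<integral>\<^sup>+ \<xi>. e2ennreal (max (g 0 \<xi>) 0) \<partial>completion Q) < \<infinity>"
      using fin unfolding pos_part_integral_def by (simp add: less_top)
  qed
  finally show ?thesis .
qed

lemma pos_part_integral_finite_AE:
  assumes "g \<in> borel_measurable (completion Q)" "pos_part_integral Q g \<noteq> \<infinity>"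
  shows "AE \<xi> in completion Q. g \<xi> \<noteq> \<infinity>"
proof -
  have "AE \<xi> in completion Q. e2ennreal (max (g \<xi>) 0) \<noteq> \<infinity>"
    using assms unfolding pos_part_integral_def by (intro nn_integral_PInf_AE) auto
  then show ?thesis
    by eventually_elim auto
qed

lemma EE_finite_imp_neg_part_finite:
  assumes "\<bar>EE Q g\<bar> \<noteq> \<infinity>"
  shows "pos_part_integral Q (\<lambda>\<xi>. - g \<xi>) \<noteq> \<infinity>"
  using assms enn2ereal_nonneg[of "pos_part_integral Q g"] unfolding EE_pos_part_integral
  by (cases "enn2ereal (pos_part_integral Q g)") auto

text \<open>Only the negative part of the first function needs to be integrable: the negative parts
  then decrease to a finite limit, so the difference of the limits of the two parts is never
  \<open>\<infinity> - \<infinity>\<close>.\<close>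
lemma EE_SUP_incseq:
  assumes g: "\<And>k. g k \<in> borel_measurable (completion Q)"
    and inc: "\<And>k \<xi>. g k \<xi> \<le> g (Suc k) \<xi>"
    and lim: "AE \<xi> in completion Q. (SUP k. g k \<xi>) = h \<xi>"
    and fin: "pos_part_integral Q (\<lambda>\<xi>. - g 0 \<xi>) \<noteq> \<infinity>"
  shows "EE Q h = (SUP k. EE Q (g k))"
proof -
  define A where "A k = pos_part_integral Q (g k)" for k
  define B where "B k = pos_part_integral Q (\<lambda>\<xi>. - g k \<xi>)" for k
  have A: "pos_part_integral Q h = (SUP k. A k)"
    unfolding A_def using g inc lim by (rule pos_part_integral_SUP)
  have B: "pos_part_integral Q (\<lambda>\<xi>. - h \<xi>) = (INF k. B k)"
    unfolding B_def
  proof (rule pos_part_integral_INF)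
    show "(\<lambda>\<xi>. - g k \<xi>) \<in> borel_measurable (completion Q)" for k
      using g by measurable
    show "AE \<xi> in completion Q. (INF k. - g k \<xi>) = - h \<xi>"
      using lim by eventually_elim (simp add: ereal_INF_uminus_eq)
  qed (use inc fin in simp_all)
  have "incseq A" "decseq B"
    using inc unfolding A_def B_def
    by (auto intro!: incseq_SucI decseq_SucI pos_part_integral_mono)
  then have "(\<lambda>k. enn2ereal (A k)) \<longlonglongrightarrow> enn2ereal (SUP k. A k)"
    and "(\<lambda>k. enn2ereal (B k)) \<longlonglongrightarrow> enn2ereal (INF k. B k)"
    by (auto intro!: tendsto_enn2erealI LIMSEQ_SUP LIMSEQ_INF)
  moreover have "(INF k. B k) \<noteq> \<infinity>"
    using fin INF_lower[of 0 UNIV B] unfolding B_def by (auto simp: top_unique)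
  ultimately have "(\<lambda>k. EE Q (g k)) \<longlonglongrightarrow> EE Q h"
    unfolding EE_pos_part_integral A B A_def[symmetric] B_def[symmetric]
    by (intro tendsto_diff_ereal_general) auto
  moreover have "incseq (\<lambda>k. EE Q (g k))"
    using inc by (intro incseq_SucI EE_mono)
  ultimately show ?thesis
    using LIMSEQ_SUP LIMSEQ_unique by blast
qed

section \<open>Lower limits of the expectations\<close>

lemma liminf_le_joint_liminf_add:
  fixes \<phi> :: "nat \<Rightarrow> 'b::metric_space \<Rightarrow> ereal"
  assumes \<delta>: "0 < \<delta>" and le: "\<And>\<nu> y. dist y x < \<delta> \<Longrightarrow> a \<nu> \<le> \<phi> \<nu> y + ereal c"
  shows "liminf a \<le> joint_liminf \<phi> x + ereal c"
  unfolding liminf_SUP_INF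
proof (rule SUP_least)
  fix N
  have "(INF \<nu>\<in>{N..}. a \<nu>) - ereal c \<le> (INF \<nu>\<in>{N..}. INF y\<in>{y. dist y x < \<delta>}. \<phi> \<nu> y)"
  proof (intro INF_greatest)
    fix \<nu> y assume "\<nu> \<in> {N..}" "y \<in> {y. dist y x < \<delta>}"
    then have "(INF \<nu>\<in>{N..}. a \<nu>) \<le> \<phi> \<nu> y + ereal c"
      using le by (intro INF_lower2) auto
    then show "(INF \<nu>\<in>{N..}. a \<nu>) - ereal c \<le> \<phi> \<nu> y"
      by (simp add: ereal_minus_le_iff)
  qed
  also have "\<dots> \<le> joint_liminf \<phi> x"
    unfolding joint_liminf_def using \<delta> by (intro SUP_upper2[of \<delta>] SUP_upper) auto
  finally show "(INF \<nu>\<in>{N..}. a \<nu>) \<le> joint_liminf \<phi> x + ereal c"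
    by (simp add: ereal_minus_le_iff)
qed

lemma joint_liminf_ge_of_dense:
  fixes \<phi> \<psi> :: "nat \<Rightarrow> 'b::metric_space \<Rightarrow> ereal" and \<Phi> :: "'b \<Rightarrow> ereal"
  assumes dense: "closure X0 = UNIV" and L: "0 \<le> L"
    and \<psi>_le: "\<And>\<nu> y. \<psi> \<nu> y \<le> \<phi> \<nu> y"
    and \<psi>_lip: "\<And>\<nu> x y. \<psi> \<nu> x \<le> \<psi> \<nu> y + ereal (L * dist x y)"
    and \<Phi>_lip: "\<And>x y. \<Phi> x \<le> \<Phi> y + ereal (L * dist x y)"
    and X0: "\<And>x0. x0 \<in> X0 \<Longrightarrow> \<Phi> x0 \<le> liminf (\<lambda>\<nu>. \<psi> \<nu> x0)"
  shows "\<Phi> x \<le> joint_liminf \<phi> x"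
proof (rule ereal_le_epsilon2)
  fix e :: real assume e: "0 < e"
  define \<eta> where "\<eta> = e / (3 * L + 1)"
  have \<eta>: "0 < \<eta>" "3 * L * \<eta> \<le> e"
    using e L by (auto simp: \<eta>_def field_simps)
  obtain x0 where x0: "x0 \<in> X0" "dist x0 x < \<eta>"
    using dense \<eta>(1) closure_approachable[of x X0] by auto
  have "\<psi> \<nu> x0 \<le> \<phi> \<nu> y + ereal (2 * L * \<eta>)" if "dist y x < \<eta>" for \<nu> y
  proof -
    have "dist x0 y \<le> 2 * \<eta>"
      using dist_triangle2[of x0 y x] that x0(2) by simp
    then have "L * dist x0 y \<le> 2 * L * \<eta>"
      using L mult_left_mono by fastforce
    then have "\<psi> \<nu> y + ereal (L * dist x0 y) \<le> \<phi> \<nu> y + ereal (2 * L * \<eta>)"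
      using \<psi>_le by (intro add_mono) auto
    then show ?thesis
      using \<psi>_lip[of \<nu> x0 y] by order
  qed
  then have "liminf (\<lambda>\<nu>. \<psi> \<nu> x0) \<le> joint_liminf \<phi> x + ereal (2 * L * \<eta>)"
    using \<eta>(1) by (rule liminf_le_joint_liminf_add[rotated])
  moreover have "\<Phi> x \<le> \<Phi> x0 + ereal (L * \<eta>)"
  proof -
    have "L * dist x x0 \<le> L * \<eta>"
      using x0(2) L by (simp add: dist_commute mult_left_mono)
    then show ?thesis
      using \<Phi>_lip[of x x0] by (meson add_left_mono ereal_less_eq(3) order_trans)
  qed
  ultimately have "\<Phi> x \<le> joint_liminf \<phi> x + ereal (2 * L * \<eta>) + ereal (L * \<eta>)"
    using X0[OF x0(1)] by (meson add_right_mono order_trans)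
  also have "\<dots> \<le> joint_liminf \<phi> x + ereal e"
    using \<eta>(2) by (cases "joint_liminf \<phi> x") auto
  finally show "\<Phi> x \<le> joint_liminf \<phi> x + ereal e" .
qed

lemma Efun_envelope_le: "Efun Q (envelope h \<kappa>) x \<le> Efun Q h x"
  unfolding Efun_def by (intro EE_mono envelope_le)

lemma Efun_envelope_lipschitz:
  fixes h :: "'a \<Rightarrow> 'b::metric_space \<Rightarrow> ereal"
  assumes suslin: "suslin_space (euclidean :: 'b topology)"
    and h: "(\<lambda>(\<xi>, x). h \<xi> x) \<in> borel_measurable (M \<Otimes>\<^sub>M borel)"
    and Q: "prob_space Q" "sets Q = sets M" and \<kappa>: "0 \<le> \<kappa>"
  shows "Efun Q (envelope h \<kappa>) x \<le> Efun Q (envelope h \<kappa>) y + ereal (2 * \<kappa> * dist x y)"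
proof -
  have "\<And>x. (\<lambda>\<xi>. envelope h \<kappa> \<xi> x) \<in> borel_measurable (completion Q)"
    using suslin h prob_space_imp_sigma_finite[OF Q(1)] Q(2) by (rule envelope_measurable_completion)
  then have "EE Q (\<lambda>\<xi>. envelope h \<kappa> \<xi> x) \<le> EE Q (\<lambda>\<xi>. envelope h \<kappa> \<xi> y) + ereal (2 * (\<kappa> * dist x y))"
    using \<kappa> by (intro EE_le_add Q(1) envelope_lipschitz) auto
  then show ?thesis
    by (simp add: Efun_def mult.assoc)
qed

lemma Efun_SUP_envelope:
  fixes f :: "'a \<Rightarrow> 'b::metric_space \<Rightarrow> ereal"
  assumes suslin: "suslin_space (euclidean :: 'b topology)"
    and f: "(\<lambda>(\<xi>, x). f \<xi> x) \<in> borel_measurable (M \<Otimes>\<^sub>M borel)"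
    and P: "prob_space P" "sets P = sets M" and lsc: "AE \<xi> in P. lsc (f \<xi>)"
    and \<kappa>: "0 \<le> \<kappa>" and fin: "\<bar>Efun P (envelope f \<kappa>) x\<bar> \<noteq> \<infinity>"
  shows "Efun P f x = (SUP k::nat. Efun P (envelope f (\<kappa> + real k)) x)"
proof -
  have meas: "(\<lambda>\<xi>. envelope f \<kappa>' \<xi> x) \<in> borel_measurable (completion P)" for \<kappa>'
    using suslin f prob_space_imp_sigma_finite[OF P(1)] P(2) by (rule envelope_measurable_completion)
  have neg: "pos_part_integral P (\<lambda>\<xi>. - envelope f \<kappa> \<xi> x) \<noteq> \<infinity>"
    using fin unfolding Efun_def by (rule EE_finite_imp_neg_part_finite)
  have "AE \<xi> in completion P. - envelope f \<kappa> \<xi> x \<noteq> \<infinity>"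
    using meas neg by (intro pos_part_integral_finite_AE) auto
  moreover have "AE \<xi> in completion P. lsc (f \<xi>)"
    using lsc by (rule AE_completion)
  ultimately have "AE \<xi> in completion P. (SUP k::nat. envelope f (\<kappa> + real k) \<xi> x) = f \<xi> x"
    by eventually_elim (use \<kappa> in \<open>auto intro: SUP_envelope\<close>)
  then show ?thesis
    unfolding Efun_def using meas neg by (intro EE_SUP_incseq) (auto intro: envelope_mono)
qed

lemma Efun_le_of_envelope_le:
  fixes f :: "'a \<Rightarrow> 'b::metric_space \<Rightarrow> ereal"
  assumes suslin: "suslin_space (euclidean :: 'b topology)"
    and f: "(\<lambda>(\<xi>, x). f \<xi> x) \<in> borel_measurable (M \<Otimes>\<^sub>M borel)"
    and P: "prob_space P" "sets P = sets M" and lsc: "AE \<xi> in P. lsc (f \<xi>)"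
    and \<kappa>0: "0 \<le> \<kappa>0" and below: "-\<infinity> < Efun P (envelope f \<kappa>0) x"
    and le: "\<And>\<kappa>. \<kappa>0 \<le> \<kappa> \<Longrightarrow> Efun P (envelope f \<kappa>) x \<le> c"
  shows "Efun P f x \<le> c"
proof (cases "Efun P (envelope f \<kappa>0) x = \<infinity>")
  case True
  then show ?thesis
    using le[of \<kappa>0] by simp
next
  case False
  then have "Efun P f x = (SUP k::nat. Efun P (envelope f (\<kappa>0 + real k)) x)"
    using below by (intro Efun_SUP_envelope[OF suslin f P lsc \<kappa>0]) auto
  also have "\<dots> \<le> c"
    by (rule SUP_least) (rule le, simp)
  finally show ?thesis .
qed

theorem lemma3p1:
  fixes M :: "'a measure" and P :: "'a measure" and Pn :: "nat \<Rightarrow> 'a measure"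
    and f :: "'a \<Rightarrow> 'b::metric_space \<Rightarrow> ereal" and fn :: "nat \<Rightarrow> 'a \<Rightarrow> 'b \<Rightarrow> ereal"
  assumes suslin: "suslin_space (euclidean :: 'b topology)"
    and P_prob: "prob_space P" and P_sets: "sets P = sets M"
    and Pn_prob: "\<And>\<nu>. prob_space (Pn \<nu>)" and Pn_sets: "\<And>\<nu>. sets (Pn \<nu>) = sets M"
    and f_meas: "(\<lambda>(\<xi>, x). f \<xi> x) \<in> borel_measurable (M \<Otimes>\<^sub>M borel)"
    and fn_meas: "\<And>\<nu>. (\<lambda>(\<xi>, x). fn \<nu> \<xi> x) \<in> borel_measurable (M \<Otimes>\<^sub>M borel)"
    and f_lsc: "AE \<xi> in P. lsc (f \<xi>)"
    and ii: "\<exists>X0 :: 'b set. \<exists>\<kappa>0 :: nat. countable X0 \<and> closure X0 = UNIV \<and>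
              (\<forall>x0\<in>X0. \<forall>\<kappa>::real. \<kappa> \<ge> real \<kappa>0 \<longrightarrow>
                 liminf (\<lambda>\<nu>. Efun (Pn \<nu>) (envelope (fn \<nu>) \<kappa>) x0) \<ge> Efun P (envelope f \<kappa>) x0
                 \<and> Efun P (envelope f \<kappa>) x0 > -\<infinity>)"
  shows "(\<forall>x. joint_liminf (\<lambda>\<nu> y. Efun (Pn \<nu>) (fn \<nu>) y) x \<ge> Efun P f x)
       \<and> ((\<exists>xt. joint_liminf (\<lambda>\<nu> y. Efun (Pn \<nu>) (fn \<nu>) y) xt < \<infinity>)
            \<longrightarrow> (\<forall>x. Efun P f x > -\<infinity>))"
proof -
  obtain X0 :: "'b set" and \<kappa>0 :: nat where dense: "closure X0 = UNIV"
    and hyp: "\<And>x0 \<kappa>. x0 \<in> X0 \<Longrightarrow> real \<kappa>0 \<le> \<kappa> \<Longrightarrow>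
      Efun P (envelope f \<kappa>) x0 \<le> liminf (\<lambda>\<nu>. Efun (Pn \<nu>) (envelope (fn \<nu>) \<kappa>) x0) \<and>
      -\<infinity> < Efun P (envelope f \<kappa>) x0"
    using ii by blast
  let ?J = "joint_liminf (\<lambda>\<nu> y. Efun (Pn \<nu>) (fn \<nu>) y)"
  note lip_P = Efun_envelope_lipschitz[OF suslin f_meas P_prob P_sets]
  note lip_Pn = Efun_envelope_lipschitz[OF suslin fn_meas Pn_prob Pn_sets]
  have le_J: "Efun P (envelope f \<kappa>) x \<le> ?J x" if \<kappa>: "real \<kappa>0 \<le> \<kappa>" for \<kappa> x
  proof -
    have "0 \<le> \<kappa>"
      using \<kappa> of_nat_0_le_iff[of \<kappa>0] by linarith
    then show ?thesis
      using dense hyp \<kappa> Efun_envelope_le lip_P lip_Pn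
      by (intro joint_liminf_ge_of_dense[where L="2 * \<kappa>"
            and \<psi>="\<lambda>\<nu>. Efun (Pn \<nu>) (envelope (fn \<nu>) \<kappa>)"]) auto
  qed
  obtain x0 where "x0 \<in> X0"
    using dense by fastforce
  then have below: "-\<infinity> < Efun P (envelope f \<kappa>0) x" for x
    using hyp[of x0 \<kappa>0] lip_P[of \<kappa>0 x0 x] by auto
  have "-\<infinity> < Efun P f x" for x
    using below[of x] Efun_envelope_le[of P f "real \<kappa>0" x] by order
  moreover have "Efun P f x \<le> ?J x" for x
    using below le_J
    by (intro Efun_le_of_envelope_le[OF suslin f_meas P_prob P_sets f_lsc, of "real \<kappa>0"]) auto
  ultimately show ?thesis
    by simp
qed

end
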